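(* Let $G$ be an esp-digraph. Then $\chi_o(G)\le 7$.
   Context: An oriented graph is a digraph without loops and without pairs of opposite arcs. For a digraph $G=(V,E)$ (parallel arcs allowed; the definitions apply verbatim), an oriented $r$-vertex-coloring is a map $c:V\to\{1,\dots,r\}$ such that (i) $c(u)\ne c(v)$ for every arc $(u,v)\in E$, and (ii) $c(u)\ne c(y)$ for every two arcs $(u,v),(x,y)\in E$ with $c(v)=c(x)$. Equivalently, $c$ is a homomorphism to an oriented graph on $r$ vertices. The oriented chromatic number $\chi_o(G)$ is the smallest $r$ for which such a coloring exists. Edge series-parallel (multi)digraphs (esp-digraphs) are defined recursively, each with a distinguished source and sink: (i) a digraph with two distinct vertices $u,v$ and the single arc $(u,v)$ is an esp-digraph with source $u$ and sink $v$; (ii) if $G_1,G_2$ are vertex-disjoint esp-digraphs, then the parallel composition $G_1\cup G_2$ (identify the source of $G_1$ with the source of $G_2$ and the sink of $G_1$ with the sink of $G_2$; arcs are united, possibly creating parallel arcs) is an esp-digraph with these identified source and sink, and the series composition $G_1\times G_2$ (identify the sink of $G_1$ with the source of $G_2$) is an esp-digraph with source the source of $G_1$ and sink the sink of $G_2$. *)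

theory Defs
  imports Main "HOL-Library.Multiset"
begin

definition oriented_coloring ::
  "'a set \<Rightarrow> ('a \<times> 'a) multiset \<Rightarrow> nat \<Rightarrow> ('a \<Rightarrow> nat) \<Rightarrow> bool" where
  "oriented_coloring V E r c \<longleftrightarrow>
     (\<forall>v\<in>V. c v \<in> {1..r}) \<and>
     (\<forall>(u,v)\<in>set_mset E. c u \<noteq> c v) \<and>
     (\<forall>(u,v)\<in>set_mset E. \<forall>(x,y)\<in>set_mset E. c v = c x \<longrightarrow> c u \<noteq> c y)"

definition oriented_chromatic_number :: "'a set \<Rightarrow> ('a \<times> 'a) multiset \<Rightarrow> nat" where
  "oriented_chromatic_number V E = (LEAST r. \<exists>c. oriented_coloring V E r c)"

text \<open>Edge series-parallel digraphs (V, E, source, sink); the identification of vertices in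
  the compositions is modelled by requiring the two parts to share exactly the identified
  vertices (so the result is the composition up to isomorphism).\<close>

inductive esp :: "'a set \<Rightarrow> ('a \<times> 'a) multiset \<Rightarrow> 'a \<Rightarrow> 'a \<Rightarrow> bool" where
  arc: "u \<noteq> v \<Longrightarrow> esp {u, v} {#(u, v)#} u v"
| par: "esp V1 E1 s t \<Longrightarrow> esp V2 E2 s t \<Longrightarrow> V1 \<inter> V2 = {s, t} \<Longrightarrow>
        esp (V1 \<union> V2) (E1 + E2) s t"
| ser: "esp V1 E1 s m \<Longrightarrow> esp V2 E2 m t \<Longrightarrow> V1 \<inter> V2 = {m} \<Longrightarrow>
        esp (V1 \<union> V2) (E1 + E2) s t"

end

theory Submission
  imports Defs
begin

text \<open>An oriented colouring with r colours is the same as a homomorphism into an asymmetric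
  relation on r colours. The Paley tournament on 7 vertices (x \<rightarrow> y iff y - x is a nonzero
  square mod 7) has the property that every arc (a, b) factors as a \<rightarrow> w \<rightarrow> b. By induction
  on the esp-construction, every esp-digraph then maps into it with source and sink sent to
  the ends of any prescribed arc: parallel composition glues two such maps agreeing on source
  and sink, and series composition glues maps onto the two halves of a factored arc.\<close>

definition is_hom :: "'a set \<Rightarrow> ('a \<times> 'a) multiset \<Rightarrow> 'b set \<Rightarrow> ('b \<times> 'b) set \<Rightarrow> ('a \<Rightarrow> 'b) \<Rightarrow> bool"
  where "is_hom V E C T c \<longleftrightarrow> c ` V \<subseteq> C \<and> (\<forall>(u, v) \<in># E. (c u, c v) \<in> T)"

lemma oriented_coloring_if_hom:
  assumes hom: "is_hom V E {1..r} T c" and "asym T"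
  shows "oriented_coloring V E r c"
proof -
  have arc: "(c u, c v) \<in> T" if "(u, v) \<in># E" for u v
    using hom that unfolding is_hom_def by auto
  have "c u \<noteq> c v" if "(u, v) \<in># E" for u v
    using arc[OF that] asymD[OF \<open>asym T\<close>] by metis
  moreover have "c u \<noteq> c y" if "(u, v) \<in># E" "(x, y) \<in># E" "c v = c x" for u v x y
    using arc[OF that(1)] arc[OF that(2)] that(3) asymD[OF \<open>asym T\<close>] by metis
  ultimately show ?thesis
    using hom unfolding oriented_coloring_def is_hom_def by (auto simp del: atLeastAtMost_iff)
qed

lemma esp_endpoints: "esp V E s t \<Longrightarrow> s \<in> V \<and> t \<in> V"
  by (induction rule: esp.induct) auto

lemma esp_arcs_in_vertices: "esp V E s t \<Longrightarrow> \<forall>(u, v) \<in># E. u \<in> V \<and> v \<in> V"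
  by (induction rule: esp.induct) auto

lemma is_hom_glue:
  assumes "is_hom V1 E1 C T c1" and "is_hom V2 E2 C T c2"
    and "\<forall>(u, v) \<in># E1. u \<in> V1 \<and> v \<in> V1" and "\<forall>(u, v) \<in># E2. u \<in> V2 \<and> v \<in> V2"
    and "\<forall>x \<in> V1 \<inter> V2. c1 x = c2 x"
  shows "is_hom (V1 \<union> V2) (E1 + E2) C T (\<lambda>x. if x \<in> V1 then c1 x else c2 x)"
proof -
  let ?c = "\<lambda>x. if x \<in> V1 then c1 x else c2 x"
  have agree2: "?c x = c2 x" if "x \<in> V2" for x
    using that assms(5) by auto
  have arc2: "(?c u, ?c v) \<in> T" if "(u, v) \<in># E2" for u v
  proof -
    have "u \<in> V2" "v \<in> V2" "(c2 u, c2 v) \<in> T"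
      using that assms(2,4) unfolding is_hom_def by auto
    then show ?thesis by (simp only: agree2)
  qed
  have arc1: "(?c u, ?c v) \<in> T" if "(u, v) \<in># E1" for u v
  proof -
    have "u \<in> V1" "v \<in> V1" "(c1 u, c1 v) \<in> T"
      using that assms(1,3) unfolding is_hom_def by auto
    then show ?thesis by simp
  qed
  have "?c ` (V1 \<union> V2) \<subseteq> C"
    using assms(1,2) agree2 unfolding is_hom_def by auto
  moreover have "\<forall>(u, v) \<in># E1 + E2. (?c u, ?c v) \<in> T"
    using arc1 arc2 by (auto simp only: union_iff ball_simps split: prod.splits)
  ultimately show ?thesis
    unfolding is_hom_def by blast
qed

lemma esp_hom_through_arc:
  assumes "esp V E s t"
    and factor: "\<And>a b. (a, b) \<in> T \<Longrightarrow> \<exists>w. (a, w) \<in> T \<and> (w, b) \<in> T"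
    and "T \<subseteq> C \<times> C" and "(a, b) \<in> T"
  shows "\<exists>c. is_hom V E C T c \<and> c s = a \<and> c t = b"
  using assms(1,4)
proof (induction arbitrary: a b rule: esp.induct)
  case (arc u v)
  then show ?case
    using \<open>T \<subseteq> C \<times> C\<close> unfolding is_hom_def
    by (intro exI[of _ "\<lambda>x. if x = u then a else b"]) auto
next
  case (par V1 E1 s t V2 E2)
  obtain c1 where c1: "is_hom V1 E1 C T c1" "c1 s = a" "c1 t = b"
    using par.IH(1)[OF par.prems] by blast
  obtain c2 where c2: "is_hom V2 E2 C T c2" "c2 s = a" "c2 t = b"
    using par.IH(2)[OF par.prems] by blast
  have "is_hom (V1 \<union> V2) (E1 + E2) C T (\<lambda>x. if x \<in> V1 then c1 x else c2 x)"
    using c1 c2 par.hyps(3)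
    by (intro is_hom_glue esp_arcs_in_vertices[OF par.hyps(1)] esp_arcs_in_vertices[OF par.hyps(2)])
      auto
  then show ?case
    using c1 esp_endpoints[OF par.hyps(1)] by auto
next
  case (ser V1 E1 s m V2 E2 t)
  obtain w where w: "(a, w) \<in> T" "(w, b) \<in> T"
    using factor[OF ser.prems] by blast
  obtain c1 where c1: "is_hom V1 E1 C T c1" "c1 s = a" "c1 m = w"
    using ser.IH(1)[OF w(1)] by blast
  obtain c2 where c2: "is_hom V2 E2 C T c2" "c2 m = w" "c2 t = b"
    using ser.IH(2)[OF w(2)] by blast
  have "is_hom (V1 \<union> V2) (E1 + E2) C T (\<lambda>x. if x \<in> V1 then c1 x else c2 x)"
    using c1 c2 ser.hyps(3)
    by (intro is_hom_glue esp_arcs_in_vertices[OF ser.hyps(1)] esp_arcs_in_vertices[OF ser.hyps(2)])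
      auto
  moreover have "t \<notin> V1 \<or> t = m"
    using ser.hyps(3) esp_endpoints[OF ser.hyps(2)] by blast
  ultimately show ?case
    using c1 c2 esp_endpoints[OF ser.hyps(1)] by auto
qed

text \<open>Colours are 1..7; the offset 7 avoids truncated subtraction.\<close>

definition paley7 :: "(nat \<times> nat) set" where
  "paley7 = {(x, y). x \<in> {1..7} \<and> y \<in> {1..7} \<and> (y + 7 - x) mod 7 \<in> {1, 2, 4}}"

lemma paley7_subset: "paley7 \<subseteq> {1..7} \<times> {1..7}"
  unfolding paley7_def by auto

lemma atLeastAtMost_1_7_cases:
  "x \<in> {1..7::nat} \<Longrightarrow> x = 1 \<or> x = 2 \<or> x = 3 \<or> x = 4 \<or> x = 5 \<or> x = 6 \<or> x = 7"
  by auto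

lemma asym_paley7: "asym paley7"
proof
  fix x y assume xy: "(x, y) \<in> paley7"
  then have "x \<in> {1..7}" "y \<in> {1..7}"
    unfolding paley7_def by auto
  then show "(y, x) \<notin> paley7"
    using xy unfolding paley7_def
    by (elim atLeastAtMost_1_7_cases[elim_format] disjE) auto
qed

text \<open>If y - x = d is a nonzero square, so is 4d, and d = 4d + 4d (mod 7); hence w = x + 4d.\<close>

lemma paley7_factor: "(a, b) \<in> paley7 \<Longrightarrow> \<exists>w. (a, w) \<in> paley7 \<and> (w, b) \<in> paley7"
proof -
  assume ab: "(a, b) \<in> paley7"
  define w where "w = ((a - 1) + 4 * ((b + 7 - a) mod 7)) mod 7 + 1"
  have "a \<in> {1..7}" "b \<in> {1..7}" "(b + 7 - a) mod 7 \<in> {1, 2, 4}"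
    using ab unfolding paley7_def by auto
  then have "(a, w) \<in> paley7 \<and> (w, b) \<in> paley7"
    unfolding paley7_def w_def
    by (elim atLeastAtMost_1_7_cases[elim_format] disjE) simp_all
  then show ?thesis by blast
qed

theorem theorem3:
  fixes V :: "'a set" and E :: "('a \<times> 'a) multiset" and s t :: 'a
  assumes "esp V E s t"
  shows "oriented_chromatic_number V E \<le> 7"
proof -
  have "(1, 2) \<in> paley7"
    unfolding paley7_def by auto
  then obtain c where "is_hom V E {1..7} paley7 c"
    using esp_hom_through_arc[OF assms paley7_factor paley7_subset] by blast
  then have "oriented_coloring V E 7 c"
    using asym_paley7 by (rule oriented_coloring_if_hom)
  then show ?thesis
    unfolding oriented_chromatic_number_def by (intro Least_le) blast
qed

end
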